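(* Suppose $\mathcal U$ is a smooth and strongly stable EDPM (with smoothness constant $d_2$). Then for any $K,T\ge1$, $$\tilde{\mathcal R}(\pi_{p^*},T)\le\frac{d_2}{2}\max_{i\in\mathbb K}\|F^{(i)}\|^2\,\frac{K^2}{T}.$$ Alternatively, if $\mathcal U$ is quasiconvex, then $p^*$ can be chosen to be a standard basis vector $e_{i^*}$ of $\mathbb R^K$, and for this choice $\tilde{\mathcal R}(\pi_{p^*},T)=0$ for all $T\ge1$.
   Context: Bandit setting: $K\ge1$, $\mathbb K=\{1,\dots,K\}$; arm $i$ produces i.i.d. rewards $X^{(i)}_1,X^{(i)}_2,\dots$ with distribution function $F^{(i)}$, all rewards mutually independent. $\Delta_{K-1}$ is the probability simplex, $F_p=\sum_ip_iF^{(i)}$, $\mathcal D^\Delta=\{F_p:p\in\Delta_{K-1}\}$; $\hat F^{(i)}_t(y)=\frac1t\sum_{s\le t}\mathbf 1\{X^{(i)}_s\le y\}$; $\hat{\mathcal D}$ is the set of empirical distribution functions $y\mapsto\frac1t\sum_{s\le t}\mathbf 1\{x_s\le y\}$ of all finite real sequences. $(L,\|\cdot\|)$ is a Banach space of bounded functions on $\mathbb R$ containing $\mathcal D^\Delta\cup\hat{\mathcal D}$, $\mathcal U:L\to\mathbb R$, and $L(L,\mathbb R)$ is the space of bounded linear functionals on $L$. Strongly stable: (1) there exist $b>0,q\ge1$ with $|\mathcal U(F)-\mathcal U(G)|\le b(\|F-G\|+\|F-G\|^q)$ for all $F\in\mathcal D^\Delta$, $G\in\mathcal D^\Delta\cup\hat{\mathcal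 D}$; (2) there is $a>0$ with $\mathbb P(\|\hat F^{(i)}_t-F^{(i)}\|\ge x)\le2\exp(-atx^2)$ for all $i,x>0,t\ge1$. Smooth: there exist $d_1,d_2\ge0$, $M_0>0$ and a map $A:L\to L(L,\mathbb R)$, $F\mapsto A_F$, such that for every $F\in\mathcal D^\Delta$: $|A_F(G-F)|\le d_1\|G-F\|$ for all $G\in\mathcal D^\Delta\cup\hat{\mathcal D}$, and $|\mathcal U(G)-\mathcal U(F)-A_F(G-F)|\le\frac12d_2\|G-F\|^2$ for all $G\in\mathcal D^\Delta\cup\{f\in\hat{\mathcal D}:\|F-f\|\le M_0\}$. Quasiconvex: $\mathcal U(\lambda F+(1-\lambda)G)\le\max\{\mathcal U(F),\mathcal U(G)\}$. Let $p^*\in\arg\max_{p\in\Delta_{K-1}}\mathcal U(F_p)$. $\pi_{p^*}$ is the policy whose actions $\pi_1,\pi_2,\dots\in\mathbb K$ are i.i.d. (independent of rewards) with $\mathbb P(\pi_t=i)=p^*_i$; $\tau_i(T)=\sum_{t\le T}\mathbf 1\{\pi_t=i\}$, $\tilde F^\pi_T=\frac1T\sum_i\tau_i(T)F^{(i)}$, and $\tilde{\mathcal R}(\pi,T)=\mathbb E[\mathcal U(F_{p^*})-\mathcal U(\tilde F^\pi_T)]$. *)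

theory Defs
  imports "HOL-Probability.Probability"
begin

type_synonym rfun = "real \<Rightarrow> real"

definition fun_banach :: "rfun set \<Rightarrow> (rfun \<Rightarrow> real) \<Rightarrow> bool" where
  "fun_banach L nrm \<longleftrightarrow>
     (\<forall>f\<in>L. \<exists>B. \<forall>y. \<bar>f y\<bar> \<le> B) \<and>
     (\<lambda>_. 0) \<in> L \<and>
     (\<forall>f\<in>L. \<forall>g\<in>L. (\<lambda>y. f y + g y) \<in> L) \<and>
     (\<forall>c. \<forall>f\<in>L. (\<lambda>y. c * f y) \<in> L) \<and>
     (\<forall>f\<in>L. nrm f \<ge> 0) \<and>
     (\<forall>f\<in>L. nrm f = 0 \<longleftrightarrow> f = (\<lambda>_. 0)) \<and>
     (\<forall>c. \<forall>f\<in>L. nrm (\<lambda>y. c * f y) = \<bar>c\<bar> * nrm f) \<and>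
     (\<forall>f\<in>L. \<forall>g\<in>L. nrm (\<lambda>y. f y + g y) \<le> nrm f + nrm g) \<and>
     (\<forall>s :: nat \<Rightarrow> rfun. (\<forall>n. s n \<in> L) \<and>
          (\<forall>e>0. \<exists>N. \<forall>m\<ge>N. \<forall>n\<ge>N. nrm (\<lambda>y. s m y - s n y) < e)
          \<longrightarrow> (\<exists>f\<in>L. \<forall>e>0. \<exists>N. \<forall>n\<ge>N. nrm (\<lambda>y. s n y - f y) < e))"

definition bounded_lin_functional :: "rfun set \<Rightarrow> (rfun \<Rightarrow> real) \<Rightarrow> (rfun \<Rightarrow> real) \<Rightarrow> bool" where
  "bounded_lin_functional L nrm \<phi> \<longleftrightarrow>
     (\<forall>f\<in>L. \<forall>g\<in>L. \<phi> (\<lambda>y. f y + g y) = \<phi> f + \<phi> g) \<and>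
     (\<forall>c. \<forall>f\<in>L. \<phi> (\<lambda>y. c * f y) = c * \<phi> f) \<and>
     (\<exists>C. \<forall>f\<in>L. \<bar>\<phi> f\<bar> \<le> C * nrm f)"

text \<open>Probability prob_simplex over arms 1..K (only coordinates 1..K matter).\<close>
definition prob_simplex :: "nat \<Rightarrow> (nat \<Rightarrow> real) set" where
  "prob_simplex K = {p. (\<forall>i\<in>{1..K}. p i \<ge> 0) \<and> (\<Sum>i\<in>{1..K}. p i) = 1}"

definition mix :: "nat \<Rightarrow> (nat \<Rightarrow> rfun) \<Rightarrow> (nat \<Rightarrow> real) \<Rightarrow> rfun" where
  "mix K F p = (\<lambda>y. \<Sum>i\<in>{1..K}. p i * F i y)"

definition Dsimplex :: "nat \<Rightarrow> (nat \<Rightarrow> rfun) \<Rightarrow> rfun set" where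
  "Dsimplex K F = {mix K F p | p. p \<in> prob_simplex K}"

definition emp :: "real list \<Rightarrow> rfun" where
  "emp xs = (\<lambda>y. real (length (filter (\<lambda>x. x \<le> y) xs)) / real (length xs))"

definition Dhat :: "rfun set" where
  "Dhat = {emp xs | xs. xs \<noteq> []}"

definition emp_arm :: "(nat \<Rightarrow> nat \<Rightarrow> 'w \<Rightarrow> real) \<Rightarrow> nat \<Rightarrow> nat \<Rightarrow> 'w \<Rightarrow> rfun" where
  "emp_arm X i t \<omega> = emp (map (\<lambda>s. X i s \<omega>) [1..<t+1])"

definition strongly_stable ::
  "rfun set \<Rightarrow> (rfun \<Rightarrow> real) \<Rightarrow> (rfun \<Rightarrow> real) \<Rightarrow> nat \<Rightarrow> (nat \<Rightarrow> rfun)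
   \<Rightarrow> 'w measure \<Rightarrow> (nat \<Rightarrow> nat \<Rightarrow> 'w \<Rightarrow> real) \<Rightarrow> bool" where
  "strongly_stable L nrm U K F M X \<longleftrightarrow>
     (\<exists>b>0. \<exists>q\<ge>1. \<forall>G\<in>Dsimplex K F. \<forall>H\<in>Dsimplex K F \<union> Dhat.
        \<bar>U G - U H\<bar> \<le> b * (nrm (\<lambda>y. G y - H y) + nrm (\<lambda>y. G y - H y) powr q)) \<and>
     (\<exists>a>0. \<forall>i\<in>{1..K}. \<forall>x>0. \<forall>t\<ge>1.
        measure M {\<omega>\<in>space M. nrm (\<lambda>y. emp_arm X i t \<omega> y - F i y) \<ge> x}
          \<le> 2 * exp (- a * real t * x\<^sup>2))"

definition smooth ::
  "rfun set \<Rightarrow> (rfun \<Rightarrow> real) \<Rightarrow> (rfun \<Rightarrow> real) \<Rightarrow> nat \<Rightarrow> (nat \<Rightarrow> rfun) \<Rightarrow> real \<Rightarrow> bool" where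
  "smooth L nrm U K F d2 \<longleftrightarrow> d2 \<ge> 0 \<and>
     (\<exists>d1\<ge>0. \<exists>M0>0. \<exists>A :: rfun \<Rightarrow> rfun \<Rightarrow> real.
        (\<forall>G\<in>L. bounded_lin_functional L nrm (A G)) \<and>
        (\<forall>G\<in>Dsimplex K F.
           (\<forall>H\<in>Dsimplex K F \<union> Dhat. \<bar>A G (\<lambda>y. H y - G y)\<bar> \<le> d1 * nrm (\<lambda>y. H y - G y)) \<and>
           (\<forall>H\<in>Dsimplex K F \<union> {f\<in>Dhat. nrm (\<lambda>y. G y - f y) \<le> M0}.
              \<bar>U H - U G - A G (\<lambda>y. H y - G y)\<bar> \<le> d2 / 2 * (nrm (\<lambda>y. H y - G y))\<^sup>2)))"

definition quasiconvex :: "rfun set \<Rightarrow> (rfun \<Rightarrow> real) \<Rightarrow> bool" where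
  "quasiconvex L U \<longleftrightarrow>
     (\<forall>G\<in>L. \<forall>H\<in>L. \<forall>c\<in>{0..1::real}.
        U (\<lambda>y. c * G y + (1 - c) * H y) \<le> max (U G) (U H))"

definition is_opt :: "(rfun \<Rightarrow> real) \<Rightarrow> nat \<Rightarrow> (nat \<Rightarrow> rfun) \<Rightarrow> (nat \<Rightarrow> real) \<Rightarrow> bool" where
  "is_opt U K F p \<longleftrightarrow> p \<in> prob_simplex K \<and> (\<forall>p'\<in>prob_simplex K. U (mix K F p') \<le> U (mix K F p))"

text \<open>Law of a single action of the randomized policy pi_p.\<close>
definition act_pmf :: "nat \<Rightarrow> (nat \<Rightarrow> real) \<Rightarrow> nat pmf" where
  "act_pmf K p = embed_pmf (\<lambda>i. if i \<in> {1..K} then p i else 0)"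

text \<open>tilde F^pi_T for an action path a (a t is the action at round t).\<close>
definition Ftilde :: "nat \<Rightarrow> (nat \<Rightarrow> rfun) \<Rightarrow> (nat \<Rightarrow> nat) \<Rightarrow> nat \<Rightarrow> rfun" where
  "Ftilde K F a T = (\<lambda>y. \<Sum>i\<in>{1..K}. real (card {t\<in>{1..T}. a t = i}) / real T * F i y)"

text \<open>tilde R(pi_p, T) relative to the optimum pstar: actions pi_1..pi_T i.i.d. with law p.\<close>
definition regret :: "(rfun \<Rightarrow> real) \<Rightarrow> nat \<Rightarrow> (nat \<Rightarrow> rfun) \<Rightarrow> (nat \<Rightarrow> real) \<Rightarrow> (nat \<Rightarrow> real) \<Rightarrow> nat \<Rightarrow> real" where
  "regret U K F pstar p T =
     measure_pmf.expectation (Pi_pmf {1..T} 0 (\<lambda>_. act_pmf K p))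
       (\<lambda>a. U (mix K F pstar) - U (Ftilde K F a T))"

definition basis :: "nat \<Rightarrow> nat \<Rightarrow> real" where
  "basis i = (\<lambda>j. if j = i then 1 else 0)"

end

theory Submission
  imports Defs
begin

(* Write p^_j = tau_j(T) / T for the empirical action frequencies, so that the
   pseudo-regret compares F_{p*} with F_{p^}.  Under pi_{p*} each T p^_j is
   binomial(T, p*_j), so p^ is unbiased and E (p^_j - p*_j)^2 = p*_j (1 - p*_j) / T.
   Expanding U to second order at F_{p*}, the first-order term
   A(F_{p^} - F_{p*}) = sum_j (p^_j - p*_j) A(F_j) has mean zero, while by
   Cauchy-Schwarz the remainder is at most
   d2/2 * K * max_j ||F_j||^2 * sum_j (p^_j - p*_j)^2, of mean at most
   d2/2 * max_j ||F_j||^2 * K^2 / T.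

   For quasiconvex U, splitting off one arm, F_p = p_x F_x + (1 - p_x) F_q with q
   supported on fewer arms, gives U(F_p) <= max_i U(F_i) by induction on the
   support; so the best single arm is optimal, and the policy that always plays it
   has tilde F = F_{p*} almost surely. *)

subsection \<open>Finite linear combinations in the function space\<close>

lemma fun_banach_zero: "fun_banach L nrm \<Longrightarrow> (\<lambda>_. 0) \<in> L \<and> nrm (\<lambda>_. 0) = 0"
  unfolding fun_banach_def by blast

lemma fun_banach_add:
  "fun_banach L nrm \<Longrightarrow> f \<in> L \<Longrightarrow> g \<in> L \<Longrightarrow> (\<lambda>y. f y + g y) \<in> L"
  unfolding fun_banach_def by blast

lemma fun_banach_scale: "fun_banach L nrm \<Longrightarrow> f \<in> L \<Longrightarrow> (\<lambda>y. c * f y) \<in> L"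
  unfolding fun_banach_def by blast

lemma fun_banach_norm_nonneg: "fun_banach L nrm \<Longrightarrow> f \<in> L \<Longrightarrow> 0 \<le> nrm f"
  unfolding fun_banach_def by blast

lemma fun_banach_norm_scale:
  "fun_banach L nrm \<Longrightarrow> f \<in> L \<Longrightarrow> nrm (\<lambda>y. c * f y) = \<bar>c\<bar> * nrm f"
  unfolding fun_banach_def by blast

lemma fun_banach_norm_triangle:
  "fun_banach L nrm \<Longrightarrow> f \<in> L \<Longrightarrow> g \<in> L \<Longrightarrow> nrm (\<lambda>y. f y + g y) \<le> nrm f + nrm g"
  unfolding fun_banach_def by blast

lemma bounded_lin_functional_add:
  "bounded_lin_functional L nrm \<phi> \<Longrightarrow> f \<in> L \<Longrightarrow> g \<in> L \<Longrightarrow> \<phi> (\<lambda>y. f y + g y) = \<phi> f + \<phi> g"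
  unfolding bounded_lin_functional_def by blast

lemma bounded_lin_functional_scale:
  "bounded_lin_functional L nrm \<phi> \<Longrightarrow> f \<in> L \<Longrightarrow> \<phi> (\<lambda>y. c * f y) = c * \<phi> f"
  unfolding bounded_lin_functional_def by blast

lemma fun_banach_lincomb_closed:
  fixes c :: "'a \<Rightarrow> real"
  assumes L: "fun_banach L nrm" and I: "finite I" and f: "\<And>i. i \<in> I \<Longrightarrow> f i \<in> L"
  shows "(\<lambda>y. \<Sum>i\<in>I. c i * f i y) \<in> L"
  using I f
proof (induction I rule: finite_induct)
  case empty
  then show ?case using fun_banach_zero[OF L] by simp
next
  case (insert x I)
  then show ?case
    using fun_banach_add[OF L fun_banach_scale[OF L, of "f x" "c x"]] by simp
qed

lemma fun_banach_norm_lincomb_le: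
  fixes c :: "'a \<Rightarrow> real"
  assumes L: "fun_banach L nrm" and I: "finite I" and f: "\<And>i. i \<in> I \<Longrightarrow> f i \<in> L"
  shows "nrm (\<lambda>y. \<Sum>i\<in>I. c i * f i y) \<le> (\<Sum>i\<in>I. \<bar>c i\<bar> * nrm (f i))"
  using I f
proof (induction I rule: finite_induct)
  case empty
  then show ?case using fun_banach_zero[OF L] by simp
next
  case (insert x I)
  let ?g = "\<lambda>y. \<Sum>i\<in>I. c i * f i y"
  have fx: "f x \<in> L" and g: "?g \<in> L"
    using insert.prems fun_banach_lincomb_closed[OF L insert.hyps(1)] by auto
  have "nrm (\<lambda>y. c x * f x y + ?g y) \<le> nrm (\<lambda>y. c x * f x y) + nrm ?g"
    by (rule fun_banach_norm_triangle[OF L fun_banach_scale[OF L fx] g])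
  also have "\<dots> = \<bar>c x\<bar> * nrm (f x) + nrm ?g"
    by (simp add: fun_banach_norm_scale[OF L fx])
  finally show ?case using insert by simp
qed

lemma bounded_lin_functional_lincomb:
  fixes c :: "'a \<Rightarrow> real"
  assumes L: "fun_banach L nrm" and \<phi>: "bounded_lin_functional L nrm \<phi>"
    and I: "finite I" and f: "\<And>i. i \<in> I \<Longrightarrow> f i \<in> L"
  shows "\<phi> (\<lambda>y. \<Sum>i\<in>I. c i * f i y) = (\<Sum>i\<in>I. c i * \<phi> (f i))"
  using I f
proof (induction I rule: finite_induct)
  case empty
  show ?case
    using bounded_lin_functional_scale[OF \<phi> conjunct1[OF fun_banach_zero[OF L]], of 0] by simp
next
  case (insert x I)
  have fx: "f x \<in> L" and g: "(\<lambda>y. \<Sum>i\<in>I. c i * f i y) \<in> L"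
    using insert.prems fun_banach_lincomb_closed[OF L insert.hyps(1)] by auto
  show ?case
    using insert bounded_lin_functional_add[OF \<phi> fun_banach_scale[OF L fx] g]
    by (simp add: bounded_lin_functional_scale[OF \<phi> fx])
qed

lemma fun_banach_norm_lincomb_sq_le:
  fixes c :: "'a \<Rightarrow> real" and B :: real
  assumes L: "fun_banach L nrm" and I: "finite I" and f: "\<And>i. i \<in> I \<Longrightarrow> f i \<in> L"
    and B: "\<And>i. i \<in> I \<Longrightarrow> (nrm (f i))\<^sup>2 \<le> B"
  shows "(nrm (\<lambda>y. \<Sum>i\<in>I. c i * f i y))\<^sup>2 \<le> card I * B * (\<Sum>i\<in>I. (c i)\<^sup>2)"
proof -
  have "0 \<le> nrm (\<lambda>y. \<Sum>i\<in>I. c i * f i y)"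
    by (rule fun_banach_norm_nonneg[OF L fun_banach_lincomb_closed[OF L I f]])
  then have "(nrm (\<lambda>y. \<Sum>i\<in>I. c i * f i y))\<^sup>2 \<le> (\<Sum>i\<in>I. \<bar>c i\<bar> * nrm (f i))\<^sup>2"
    using fun_banach_norm_lincomb_le[OF L I f] by (intro power_mono) auto
  also have "\<dots> \<le> (\<Sum>i\<in>I. (\<bar>c i\<bar> * nrm (f i))\<^sup>2) * card I"
    by (rule sum_squared_le_sum_of_squares)
  also have "\<dots> \<le> (\<Sum>i\<in>I. (c i)\<^sup>2 * B) * card I"
    using B by (intro mult_right_mono sum_mono) (auto simp: power_mult_distrib mult_left_mono)
  finally show ?thesis by (simp add: sum_distrib_left mult_ac)
qed

subsection \<open>Occupation counts under a product of identical pmfs\<close>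

lemma integrable_measure_pmf_bounded:
  fixes f :: "'a \<Rightarrow> real"
  shows "(\<And>x. \<bar>f x\<bar> \<le> B) \<Longrightarrow> integrable (measure_pmf p) f"
  by (rule measure_pmf.integrable_const_bound[where B = B]) auto

lemma expectation_Pi_pmf_prod_indicator:
  assumes A: "finite A" and S: "S \<subseteq> A"
  shows "measure_pmf.expectation (Pi_pmf A d (\<lambda>_. q)) (\<lambda>a. \<Prod>t\<in>S. of_bool (a t = i))
           = pmf q i ^ card S"
proof -
  define f where "f = (\<lambda>t v. if t \<in> S then of_bool (v = i) else 1 :: real)"
  have int: "integrable (measure_pmf q) (f t)" for t
    by (rule integrable_measure_pmf_bounded[where B = 1]) (simp add: f_def)
  have "(\<lambda>a. \<Prod>t\<in>S. of_bool (a t = i)) = (\<lambda>a. \<Prod>t\<in>A. f t (a t))"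
    using A S by (simp add: f_def prod.If_cases Int_absorb1)
  then have "measure_pmf.expectation (Pi_pmf A d (\<lambda>_. q)) (\<lambda>a. \<Prod>t\<in>S. of_bool (a t = i))
      = (\<Prod>t\<in>A. measure_pmf.expectation q (f t))"
    by (simp only:) (rule expectation_prod_Pi_pmf[OF A int], simp add: f_def)
  also have "\<dots> = (\<Prod>t\<in>S. measure_pmf.expectation q (\<lambda>v. of_bool (v = i)))"
  proof -
    have "measure_pmf.expectation q (f t)
        = (if t \<in> S then measure_pmf.expectation q (\<lambda>v. of_bool (v = i)) else 1)" for t
      by (simp add: f_def)
    then show ?thesis using A S by (simp add: prod.If_cases Int_absorb1)
  qed
  also have "\<dots> = pmf q i ^ card S"
  proof -
    have "(\<lambda>v. of_bool (v = i) :: real) = indicator {i}"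
      by (auto simp: indicator_def)
    then show ?thesis by (simp add: measure_pmf_single)
  qed
  finally show ?thesis .
qed

lemma card_filter_eq_sum_of_bool:
  "finite A \<Longrightarrow> real (card {t\<in>A. P t}) = (\<Sum>t\<in>A. of_bool (P t))"
  by (simp add: Int_def)

lemma integrable_indicator_prod:
  "integrable (measure_pmf p) (\<lambda>a. \<Prod>t\<in>S. of_bool (a t = i) :: real)"
  by (rule integrable_measure_pmf_bounded[where B = 1]) (auto simp: abs_prod intro: prod_le_1)

lemma expectation_Pi_pmf_indicator:
  assumes "finite A" "t \<in> A"
  shows "measure_pmf.expectation (Pi_pmf A d (\<lambda>_. q)) (\<lambda>a. of_bool (a t = i)) = pmf q i"
  using expectation_Pi_pmf_prod_indicator[of A "{t}"] assms by simp

lemma expectation_Pi_pmf_count: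
  assumes A: "finite A"
  shows "measure_pmf.expectation (Pi_pmf A d (\<lambda>_. q)) (\<lambda>a. real (card {t\<in>A. a t = i}))
           = card A * pmf q i"
proof -
  have "integrable (measure_pmf (Pi_pmf A d (\<lambda>_. q))) (\<lambda>a. of_bool (a t = i) :: real)" for t
    by (rule integrable_measure_pmf_bounded[where B = 1]) auto
  then have "measure_pmf.expectation (Pi_pmf A d (\<lambda>_. q)) (\<lambda>a. real (card {t\<in>A. a t = i}))
      = (\<Sum>t\<in>A. measure_pmf.expectation (Pi_pmf A d (\<lambda>_. q)) (\<lambda>a. \<Prod>u\<in>{t}. of_bool (a u = i)))"
    by (simp add: card_filter_eq_sum_of_bool[OF A] Bochner_Integration.integral_sum)
  also have "\<dots> = card A * pmf q i"
    using A by (simp add: expectation_Pi_pmf_indicator)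
  finally show ?thesis .
qed

lemma expectation_Pi_pmf_count_sq:
  assumes A: "finite A"
  shows "measure_pmf.expectation (Pi_pmf A d (\<lambda>_. q)) (\<lambda>a. (real (card {t\<in>A. a t = i}))\<^sup>2)
           = card A * pmf q i + card A * (real (card A) - 1) * (pmf q i)\<^sup>2"
proof -
  let ?P = "Pi_pmf A d (\<lambda>_. q)"
  have sq: "(real (card {t\<in>A. a t = i}))\<^sup>2 = (\<Sum>s\<in>A. \<Sum>t\<in>A. \<Prod>u\<in>{s, t}. of_bool (a u = i))"
    for a :: "_ \<Rightarrow> _"
  proof -
    have "(\<Prod>u\<in>{s, t}. of_bool (a u = i)) = of_bool (a s = i) * (of_bool (a t = i) :: real)"
      for s t by (cases "s = t") auto
    then show ?thesis
      by (simp add: card_filter_eq_sum_of_bool[OF A] power2_eq_square sum_product)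
  qed
  have row: "(\<Sum>t\<in>A. pmf q i ^ card {s, t}) = pmf q i + (real (card A) - 1) * (pmf q i)\<^sup>2"
    if s: "s \<in> A" for s
  proof -
    have "(\<Sum>t\<in>A. pmf q i ^ card {s, t}) = pmf q i + (\<Sum>t\<in>A - {s}. pmf q i ^ card {s, t})"
      using A s by (simp add: sum.remove)
    also have "(\<Sum>t\<in>A - {s}. pmf q i ^ card {s, t}) = (\<Sum>t\<in>A - {s}. (pmf q i)\<^sup>2)"
      by (rule sum.cong) (auto simp: power2_eq_square)
    moreover have "1 \<le> card A"
      using A s by (auto simp: Suc_le_eq card_gt_0_iff)
    ultimately show ?thesis
      using A s by (simp add: card_Diff_singleton of_nat_diff)
  qed
  have "measure_pmf.expectation ?P (\<lambda>a. (real (card {t\<in>A. a t = i}))\<^sup>2)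
      = (\<Sum>s\<in>A. \<Sum>t\<in>A. pmf q i ^ card {s, t})"
    unfolding sq using A
    by (simp add: Bochner_Integration.integral_sum Bochner_Integration.integrable_sum
        integrable_indicator_prod expectation_Pi_pmf_prod_indicator)
  also have "\<dots> = card A * pmf q i + card A * (real (card A) - 1) * (pmf q i)\<^sup>2"
    by (simp add: row algebra_simps)
  finally show ?thesis .
qed

lemma integrable_Pi_pmf_count_fun:
  fixes g :: "nat \<Rightarrow> real"
  assumes "finite A"
  shows "integrable (measure_pmf (Pi_pmf A d (\<lambda>_. q))) (\<lambda>a. g (card {t\<in>A. a t = i}))"
proof (rule integrable_measure_pmf_bounded)
  fix a :: "_ \<Rightarrow> _"
  have "card {t\<in>A. a t = i} \<le> card A"
    using assms by (intro card_mono) auto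
  then show "\<bar>g (card {t\<in>A. a t = i})\<bar> \<le> Max ((\<lambda>k. \<bar>g k\<bar>) ` {..card A})"
    by (intro Max_ge) auto
qed

lemma set_pmf_Pi_pmf_coord:
  assumes "finite A" "a \<in> set_pmf (Pi_pmf A d (\<lambda>_. q))" "t \<in> A"
  shows "a t \<in> set_pmf q"
  using assms by (auto simp: set_Pi_pmf PiE_dflt_def)

lemma expectation_Pi_pmf_freq_sq_dev:
  assumes A: "finite A" "A \<noteq> {}"
  shows "measure_pmf.expectation (Pi_pmf A d (\<lambda>_. q))
           (\<lambda>a. (real (card {t\<in>A. a t = i}) / card A - pmf q i)\<^sup>2)
         = pmf q i * (1 - pmf q i) / card A"
proof -
  let ?P = "Pi_pmf A d (\<lambda>_. q)" and ?N = "\<lambda>a. real (card {t\<in>A. a t = i})"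
  define n where "n = real (card A)"
  define p where "p = pmf q i"
  have n: "n > 0" using A by (simp add: n_def card_gt_0_iff)
  have int: "integrable ?P ?N" "integrable ?P (\<lambda>a. (?N a)\<^sup>2)"
    by (rule integrable_Pi_pmf_count_fun[OF A(1)])+
  have mean: "measure_pmf.expectation ?P (\<lambda>a. ?N a / n) = p"
    using A by (simp add: expectation_Pi_pmf_count n_def p_def)
  then have "measure_pmf.expectation ?P (\<lambda>a. (?N a / n - p)\<^sup>2)
      = measure_pmf.variance ?P (\<lambda>a. ?N a / n)"
    by simp
  also have "\<dots> = measure_pmf.expectation ?P (\<lambda>a. (?N a / n)\<^sup>2) - p\<^sup>2"
    using int mean by (subst measure_pmf.variance_eq) (simp_all add: power_divide)
  also have "\<dots> = (n * p + n * (n - 1) * p\<^sup>2) / n\<^sup>2 - p\<^sup>2"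
    by (simp add: power_divide expectation_Pi_pmf_count_sq A(1) n_def p_def)
  also have "\<dots> = p * (1 - p) / n"
    using n by (simp add: power2_eq_square field_simps)
  finally show ?thesis by (simp add: n_def p_def)
qed

subsection \<open>Mixtures over the probability simplex\<close>

lemma prob_simplex_coord:
  assumes "p \<in> prob_simplex K" "j \<in> {1..K}"
  shows "p j \<in> {0..1}"
proof -
  have "p j \<le> (\<Sum>i\<in>{1..K}. p i)"
    using assms by (intro member_le_sum) (auto simp: prob_simplex_def)
  then show ?thesis using assms by (simp add: prob_simplex_def)
qed

lemma mix_cong: "(\<And>j. j \<in> {1..K} \<Longrightarrow> p j = p' j) \<Longrightarrow> mix K F p = mix K F p'"
  unfolding mix_def by (intro ext sum.cong) auto

lemma basis_in_prob_simplex: "i \<in> {1..K} \<Longrightarrow> basis i \<in> prob_simplex K"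
  unfolding prob_simplex_def basis_def by auto

lemma mix_basis:
  assumes "i \<in> {1..K}"
  shows "mix K F (basis i) = F i"
proof
  fix y
  have "mix K F (basis i) y = (\<Sum>j\<in>{1..K}. if j = i then F j y else 0)"
    unfolding mix_def by (intro sum.cong) (auto simp: basis_def)
  then show "mix K F (basis i) y = F i y" using assms by simp
qed

lemma F_in_Dsimplex:
  assumes "i \<in> {1..K}"
  shows "F i \<in> Dsimplex K F"
proof -
  have "mix K F (basis i) \<in> Dsimplex K F"
    using basis_in_prob_simplex[OF assms] by (auto simp: Dsimplex_def)
  then show ?thesis by (simp add: mix_basis[OF assms])
qed

lemma mix_vertex:
  assumes p: "p \<in> prob_simplex K" and x: "x \<in> {1..K}" and px: "p x = 1"
  shows "mix K F p = F x"
proof -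
  have "(\<Sum>j\<in>{1..K} - {x}. p j) = 0"
    using p x px by (simp add: prob_simplex_def sum.remove)
  then have "p j = 0" if "j \<in> {1..K} - {x}" for j
    using p that by (subst (asm) sum_nonneg_eq_0_iff) (auto simp: prob_simplex_def)
  then have "mix K F p = mix K F (basis x)"
    using px by (intro mix_cong) (auto simp: basis_def)
  then show ?thesis using x by (simp add: mix_basis)
qed

lemma mix_split_vertex:
  assumes p: "p \<in> prob_simplex K" and x: "x \<in> {1..K}" and px: "p x \<noteq> 1"
  defines "q \<equiv> \<lambda>j. if j = x then 0 else p j / (1 - p x)"
  shows "q \<in> prob_simplex K"
    and "mix K F p = (\<lambda>y. p x * F x y + (1 - p x) * mix K F q y)"
proof -
  have px1: "p x < 1" using prob_simplex_coord[OF p x] px by simp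
  have rest: "(\<Sum>j\<in>{1..K} - {x}. p j) = 1 - p x"
    using p x by (simp add: prob_simplex_def sum.remove)
  have "(\<Sum>j\<in>{1..K}. q j) = (\<Sum>j\<in>{1..K} - {x}. p j) / (1 - p x)"
    using x by (simp add: q_def sum.remove sum_divide_distrib)
  then show "q \<in> prob_simplex K"
    using p px1 rest by (auto simp: prob_simplex_def q_def)
  show "mix K F p = (\<lambda>y. p x * F x y + (1 - p x) * mix K F q y)"
  proof
    fix y
    have "(1 - p x) * mix K F q y = (\<Sum>j\<in>{1..K} - {x}. p j * F j y)"
      using x px1 by (simp add: mix_def q_def sum.remove sum_distrib_left)
    then show "mix K F p y = p x * F x y + (1 - p x) * mix K F q y"
      using x by (simp add: mix_def sum.remove)
  qed
qed

lemma quasiconvex_mix_le_vertex_in_support: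
  assumes qc: "quasiconvex L U" and LD: "Dsimplex K F \<subseteq> L"
    and S: "finite S" "S \<subseteq> {1..K}"
    and p: "p \<in> prob_simplex K" and supp: "\<forall>j\<in>{1..K} - S. p j = 0"
  shows "\<exists>i\<in>S. U (mix K F p) \<le> U (F i)"
  using S p supp
proof (induction S arbitrary: p rule: finite_induct)
  case empty
  then show ?case by (simp add: prob_simplex_def)
next
  case (insert x S)
  have x: "x \<in> {1..K}" using insert.prems by simp
  show ?case
  proof (cases "p x = 1")
    case True
    then show ?thesis using mix_vertex[OF insert.prems(2) x] by auto
  next
    case False
    define q where "q = (\<lambda>j. if j = x then 0 else p j / (1 - p x))"
    have q: "q \<in> prob_simplex K"
      and mix_p: "mix K F p = (\<lambda>y. p x * F x y + (1 - p x) * mix K F q y)"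
      using mix_split_vertex[OF insert.prems(2) x False] by (simp_all add: q_def)
    have "\<forall>j\<in>{1..K} - S. q j = 0"
      using insert.prems(3) by (auto simp: q_def)
    then obtain i where i: "i \<in> S" "U (mix K F q) \<le> U (F i)"
      using insert.IH[OF _ q] insert.prems(1) by auto
    have "F x \<in> L" using LD F_in_Dsimplex[OF x] by blast
    then have "U (mix K F p) \<le> max (U (F x)) (U (mix K F q))"
      using qc LD q prob_simplex_coord[OF insert.prems(2) x] unfolding mix_p
      by (auto simp: quasiconvex_def Dsimplex_def)
    then have "U (mix K F p) \<le> U (F x) \<or> U (mix K F p) \<le> U (F i)"
      using i by linarith
    then show ?thesis using i by blast
  qed
qed

lemma quasiconvex_opt_vertex:
  assumes K: "K \<ge> 1" and qc: "quasiconvex L U" and LD: "Dsimplex K F \<subseteq> L"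
  shows "\<exists>i\<in>{1..K}. is_opt U K F (basis i)"
proof -
  let ?V = "(\<lambda>j. U (F j)) ` {1..K}"
  have "Max ?V \<in> ?V" using K by (intro Max_in) auto
  then obtain i where i: "i \<in> {1..K}" and "U (F i) = Max ?V" by auto
  then have max: "U (F j) \<le> U (F i)" if "j \<in> {1..K}" for j
    using that by simp
  have "U (mix K F p') \<le> U (mix K F (basis i))" if "p' \<in> prob_simplex K" for p'
    using quasiconvex_mix_le_vertex_in_support[OF qc LD finite_atLeastAtMost order_refl that]
      max mix_basis[OF i]
    by fastforce
  then show ?thesis using i basis_in_prob_simplex[OF i] by (auto simp: is_opt_def)
qed

subsection \<open>The randomized policy\<close>

definition action_freq :: "(nat \<Rightarrow> nat) \<Rightarrow> nat \<Rightarrow> nat \<Rightarrow> real" where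
  "action_freq a T j = real (card {t\<in>{1..T}. a t = j}) / real T"

lemma Ftilde_eq_mix_action_freq: "Ftilde K F a T = mix K F (action_freq a T)"
  unfolding Ftilde_def mix_def action_freq_def by simp

lemma action_freq_in_prob_simplex:
  assumes T: "T \<ge> 1" and a: "\<And>t. t \<in> {1..T} \<Longrightarrow> a t \<in> {1..K}"
  shows "action_freq a T \<in> prob_simplex K"
proof -
  have "(\<Sum>j\<in>{1..K}. real (card {t\<in>{1..T}. a t = j}))
      = (\<Sum>j\<in>{1..K}. \<Sum>t\<in>{1..T}. of_bool (a t = j))"
    by (simp only: card_filter_eq_sum_of_bool[OF finite_atLeastAtMost])
  also have "\<dots> = (\<Sum>t\<in>{1..T}. \<Sum>j\<in>{1..K}. of_bool (a t = j))"
    by (rule sum.swap)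
  also have "\<dots> = (\<Sum>t\<in>{1..T}. 1)"
  proof (rule sum.cong)
    fix t assume "t \<in> {1..T}"
    then show "(\<Sum>j\<in>{1..K}. of_bool (a t = j)) = (1 :: real)"
      using a by (simp add: of_bool_def sum.delta)
  qed simp
  finally show ?thesis
    using T by (auto simp: prob_simplex_def action_freq_def simp flip: sum_divide_distrib)
qed

lemma action_freq_const:
  assumes T: "T \<ge> 1" and a: "\<And>t. t \<in> {1..T} \<Longrightarrow> a t = i"
  shows "action_freq a T = basis i"
proof
  fix j
  show "action_freq a T j = basis i j"
  proof (cases "j = i")
    case True
    then have "{t\<in>{1..T}. a t = j} = {1..T}" using a by blast
    then show ?thesis using True T unfolding action_freq_def basis_def by simp
  next
    case False
    then have "{t\<in>{1..T}. a t = j} = {}" using a by blast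
    then show ?thesis using False unfolding action_freq_def basis_def by simp
  qed
qed

lemma pmf_act_pmf:
  assumes "p \<in> prob_simplex K"
  shows "pmf (act_pmf K p) j = (if j \<in> {1..K} then p j else 0)"
proof -
  have "(\<integral>\<^sup>+x. ennreal (if x \<in> {1..K} then p x else 0) \<partial>count_space UNIV)
        = (\<Sum>x\<in>{1..K}. ennreal (p x))"
    by (subst nn_integral_count_space'[where A = "{1..K}"]) auto
  also have "\<dots> = 1"
    using assms by (subst sum_ennreal) (auto simp: prob_simplex_def)
  finally show ?thesis
    using assms unfolding act_pmf_def by (subst pmf_embed_pmf) (auto simp: prob_simplex_def)
qed

lemma set_pmf_act_pmf:
  "p \<in> prob_simplex K \<Longrightarrow> set_pmf (act_pmf K p) = {j\<in>{1..K}. p j \<noteq> 0}"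
  by (auto simp: set_pmf_eq pmf_act_pmf)

lemma regret_vertex:
  assumes i: "i \<in> {1..K}" and T: "T \<ge> 1"
  shows "regret U K F (basis i) (basis i) T = 0"
proof -
  let ?P = "Pi_pmf {1..T} 0 (\<lambda>_. act_pmf K (basis i))"
  have "action_freq a T = basis i" if a: "a \<in> set_pmf ?P" for a
  proof (rule action_freq_const[OF T])
    fix t assume "t \<in> {1..T}"
    then show "a t = i"
      using set_pmf_Pi_pmf_coord[OF _ a \<open>t \<in> {1..T}\<close>]
        set_pmf_act_pmf[OF basis_in_prob_simplex[OF i]]
      by (auto simp: basis_def split: if_splits)
  qed
  then have "AE a in ?P. U (mix K F (basis i)) - U (Ftilde K F a T) = 0"
    by (auto simp: AE_measure_pmf_iff Ftilde_eq_mix_action_freq)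
  then have "regret U K F (basis i) (basis i) T = measure_pmf.expectation ?P (\<lambda>_. 0)"
    unfolding regret_def by (intro integral_cong_AE) auto
  then show ?thesis by simp
qed

lemma expectation_action_freq:
  assumes p: "p \<in> prob_simplex K" and T: "T \<ge> 1" and j: "j \<in> {1..K}"
  defines "P \<equiv> Pi_pmf {1..T} 0 (\<lambda>_. act_pmf K p)"
  shows "measure_pmf.expectation P (\<lambda>a. action_freq a T j) = p j"
    and "measure_pmf.expectation P (\<lambda>a. (action_freq a T j - p j)\<^sup>2) = p j * (1 - p j) / T"
proof -
  have pmf: "pmf (act_pmf K p) j = p j" using j by (simp add: pmf_act_pmf[OF p])
  show "measure_pmf.expectation P (\<lambda>a. action_freq a T j) = p j"
    using T unfolding P_def action_freq_def
    by (simp add: expectation_Pi_pmf_count[of "{1..T}", simplified] pmf)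
  show "measure_pmf.expectation P (\<lambda>a. (action_freq a T j - p j)\<^sup>2) = p j * (1 - p j) / T"
    using T expectation_Pi_pmf_freq_sq_dev[of "{1..T}" 0 "act_pmf K p" j]
    unfolding P_def action_freq_def by (simp add: pmf)
qed

lemma smooth_mix_upper_bound:
  assumes L: "fun_banach L nrm" and LD: "Dsimplex K F \<subseteq> L"
    and sm: "smooth L nrm U K F d2" and p: "p \<in> prob_simplex K"
  obtains g :: "nat \<Rightarrow> real" where
    "\<And>p'. p' \<in> prob_simplex K \<Longrightarrow> U (mix K F p) - U (mix K F p')
        \<le> (\<Sum>j\<in>{1..K}. (p' j - p j) * g j)
          + d2 / 2 * K * (MAX i\<in>{1..K}. (nrm (F i))\<^sup>2) * (\<Sum>j\<in>{1..K}. (p' j - p j)\<^sup>2)"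
proof -
  obtain A where A_lin: "\<forall>G\<in>L. bounded_lin_functional L nrm (A G)"
    and A_taylor: "\<forall>G\<in>Dsimplex K F. \<forall>H\<in>Dsimplex K F.
        \<bar>U H - U G - A G (\<lambda>y. H y - G y)\<bar> \<le> d2 / 2 * (nrm (\<lambda>y. H y - G y))\<^sup>2"
    using sm unfolding smooth_def by blast
  have d2: "d2 \<ge> 0" using sm by (simp add: smooth_def)
  define G where "G = mix K F p"
  define B where "B = (MAX i\<in>{1..K}. (nrm (F i))\<^sup>2)"
  have G: "G \<in> Dsimplex K F" using p by (auto simp: G_def Dsimplex_def)
  have FL: "F j \<in> L" if "j \<in> {1..K}" for j
    using LD F_in_Dsimplex[OF that] by blast
  have B: "(nrm (F j))\<^sup>2 \<le> B" if "j \<in> {1..K}" for j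
    using that by (simp add: B_def)
  show ?thesis
  proof (rule that[of "\<lambda>j. - A G (F j)"])
    fix p' assume p': "p' \<in> prob_simplex K"
    define c where "c j = p' j - p j" for j
    have H: "mix K F p' \<in> Dsimplex K F" using p' by (auto simp: Dsimplex_def)
    have diff: "(\<lambda>y. mix K F p' y - G y) = (\<lambda>y. \<Sum>j\<in>{1..K}. c j * F j y)"
      unfolding G_def mix_def c_def by (simp add: sum_subtractf left_diff_distrib)
    have lin: "A G (\<lambda>y. mix K F p' y - G y) = (\<Sum>j\<in>{1..K}. c j * A G (F j))"
      unfolding diff using A_lin G LD FL by (intro bounded_lin_functional_lincomb[OF L]) auto
    have quad: "(nrm (\<lambda>y. mix K F p' y - G y))\<^sup>2 \<le> K * B * (\<Sum>j\<in>{1..K}. (c j)\<^sup>2)"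
      unfolding diff using fun_banach_norm_lincomb_sq_le[where I = "{1..K}" and f = F, OF L _ FL B]
      by simp
    have "U G - U (mix K F p')
        \<le> - A G (\<lambda>y. mix K F p' y - G y) + d2 / 2 * (nrm (\<lambda>y. mix K F p' y - G y))\<^sup>2"
      using bspec[OF bspec[OF A_taylor G] H] unfolding abs_le_iff by linarith
    also have "\<dots> \<le> (\<Sum>j\<in>{1..K}. c j * - A G (F j)) + d2 / 2 * K * B * (\<Sum>j\<in>{1..K}. (c j)\<^sup>2)"
      using mult_left_mono[OF quad, of "d2 / 2"] d2 by (simp add: lin sum_negf mult.assoc)
    finally show "U (mix K F p) - U (mix K F p')
        \<le> (\<Sum>j\<in>{1..K}. (p' j - p j) * - A G (F j))
          + d2 / 2 * K * (MAX i\<in>{1..K}. (nrm (F i))\<^sup>2) * (\<Sum>j\<in>{1..K}. (p' j - p j)\<^sup>2)"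
      by (simp add: G_def c_def B_def)
  qed
qed

lemma regret_le_smooth:
  assumes L: "fun_banach L nrm" and LD: "Dsimplex K F \<subseteq> L"
    and sm: "smooth L nrm U K F d2" and p: "p \<in> prob_simplex K" and T: "T \<ge> 1"
  shows "regret U K F p p T \<le> d2 / 2 * (MAX i\<in>{1..K}. (nrm (F i))\<^sup>2) * real K ^ 2 / real T"
proof -
  define P where "P = Pi_pmf {1..T} 0 (\<lambda>_. act_pmf K p)"
  let ?f = "\<lambda>a j. action_freq a T j - p j"
  define C where "C = d2 / 2 * K * (MAX i\<in>{1..K}. (nrm (F i))\<^sup>2)"
  obtain g where g: "\<And>p'. p' \<in> prob_simplex K \<Longrightarrow> U (mix K F p) - U (mix K F p')
      \<le> (\<Sum>j\<in>{1..K}. (p' j - p j) * g j) + C * (\<Sum>j\<in>{1..K}. (p' j - p j)\<^sup>2)"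
    using smooth_mix_upper_bound[OF L LD sm p] unfolding C_def by blast
  have "K \<ge> 1" using p by (cases K) (auto simp: prob_simplex_def)
  then have "(nrm (F 1))\<^sup>2 \<le> (MAX i\<in>{1..K}. (nrm (F i))\<^sup>2)" by simp
  then have "0 \<le> (MAX i\<in>{1..K}. (nrm (F i))\<^sup>2)"
    using zero_le_power2 order_trans by blast
  then have C: "C \<ge> 0"
    using sm by (simp add: C_def smooth_def)
  have "finite (set_pmf P)"
    using set_pmf_act_pmf[OF p] by (auto simp: P_def set_Pi_pmf intro!: finite_PiE_dflt)
  then have int: "integrable P h" for h :: "_ \<Rightarrow> real"
    by (rule integrable_measure_pmf_finite)
  have freq: "action_freq a T \<in> prob_simplex K" if "a \<in> set_pmf P" for a
    using set_pmf_Pi_pmf_coord[OF _ that[unfolded P_def]] set_pmf_act_pmf[OF p]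
    by (intro action_freq_in_prob_simplex[OF T]) auto
  have "regret U K F p p T = measure_pmf.expectation P (\<lambda>a. U (mix K F p) - U (mix K F (action_freq a T)))"
    unfolding regret_def Ftilde_eq_mix_action_freq P_def ..
  also have "\<dots> \<le> measure_pmf.expectation P
      (\<lambda>a. (\<Sum>j\<in>{1..K}. ?f a j * g j) + C * (\<Sum>j\<in>{1..K}. (?f a j)\<^sup>2))"
    by (rule integral_mono_AE[OF int int]) (unfold AE_measure_pmf_iff, use g freq in blast)
  also have "\<dots> = (\<Sum>j\<in>{1..K}. (measure_pmf.expectation P (\<lambda>a. action_freq a T j) - p j) * g j)
      + C * (\<Sum>j\<in>{1..K}. measure_pmf.expectation P (\<lambda>a. (?f a j)\<^sup>2))"
    by (simp add: int Bochner_Integration.integral_sum)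
  also have "\<dots> = C * (\<Sum>j\<in>{1..K}. p j * (1 - p j) / T)"
    using expectation_action_freq[OF p T, folded P_def] by simp
  \<comment> \<open>Crude, since \<open>\<Sum>j. p j * (1 - p j) \<le> 1\<close>, but enough for the stated \<open>K\<^sup>2 / T\<close>.\<close>
  also have "\<dots> \<le> C * (\<Sum>j\<in>{1..K}. 1 / T)"
  proof (intro mult_left_mono[OF sum_mono C] divide_right_mono)
    fix j assume "j \<in> {1..K}"
    then show "p j * (1 - p j) \<le> 1"
      using prob_simplex_coord[OF p] by (simp add: mult_le_one)
  qed simp
  also have "\<dots> = d2 / 2 * (MAX i\<in>{1..K}. (nrm (F i))\<^sup>2) * real K ^ 2 / real T"
    by (simp add: C_def power2_eq_square)
  finally show ?thesis .
qed

theorem proposition17: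
  fixes K :: nat and F :: "nat \<Rightarrow> real \<Rightarrow> real"
    and M :: "'w measure" and X :: "nat \<Rightarrow> nat \<Rightarrow> 'w \<Rightarrow> real"
    and L :: "(real \<Rightarrow> real) set" and nrm :: "(real \<Rightarrow> real) \<Rightarrow> real"
    and U :: "(real \<Rightarrow> real) \<Rightarrow> real" and d2 :: real
  assumes K: "K \<ge> 1"
    and M: "prob_space M"
    and indep: "prob_space.indep_vars M (\<lambda>_. borel) (\<lambda>(i, s). X i s) ({1..K} \<times> {1..})"
    and law: "\<forall>i\<in>{1..K}. \<forall>s\<ge>1. cdf (distr M borel (X i s)) = F i"
    and L: "fun_banach L nrm"
    and LD: "Dsimplex K F \<union> Dhat \<subseteq> L"
  shows "(smooth L nrm U K F d2 \<and> strongly_stable L nrm U K F M X \<longrightarrow>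
            (\<forall>pstar. is_opt U K F pstar \<longrightarrow>
               (\<forall>T\<ge>1. regret U K F pstar pstar T
                   \<le> d2 / 2 * (MAX i\<in>{1..K}. (nrm (F i))\<^sup>2) * real K ^ 2 / real T)))
       \<and> (quasiconvex L U \<longrightarrow>
            (\<exists>i\<in>{1..K}. is_opt U K F (basis i) \<and>
               (\<forall>T\<ge>1. regret U K F (basis i) (basis i) T = 0)))"
proof (intro conjI impI allI)
  have LD': "Dsimplex K F \<subseteq> L" using LD by blast
  fix pstar and T :: nat
  assume "smooth L nrm U K F d2 \<and> strongly_stable L nrm U K F M X"
    and "is_opt U K F pstar" and "1 \<le> T"
  then show "regret U K F pstar pstar T
      \<le> d2 / 2 * (MAX i\<in>{1..K}. (nrm (F i))\<^sup>2) * real K ^ 2 / real T"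
    using regret_le_smooth[OF L LD'] by (simp add: is_opt_def)
next
  assume "quasiconvex L U"
  then show "\<exists>i\<in>{1..K}. is_opt U K F (basis i) \<and> (\<forall>T\<ge>1. regret U K F (basis i) (basis i) T = 0)"
    using quasiconvex_opt_vertex[OF K] LD regret_vertex by blast
qed

end
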